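(* Let $\theta>0$, $n\ge2$, $j\in\{2,\ldots,n\}$. Then for $0\le r\le\lfloor n/j\rfloor$, $$\mathbb{P}(\tilde C_j(n)=r)=\Big(\frac{\theta}{j}\Big)^r\frac{1}{r!}\,\frac{n!}{\lambda_n(\theta)\,\theta_{(n)}}\sum_{i=r}^{\lfloor n/j\rfloor}\frac{(-1)^{i-r}}{(i-r)!}\,\frac{\lambda_{n-ji}(\theta)\,\theta_{(n-ji)}}{(n-ji)!}\Big(\frac{\theta}{j}\Big)^{i-r}.$$
   Context: Fix $\theta>0$. Write $\theta_{(0)}=1$ and $\theta_{(m)}=\theta(\theta+1)\cdots(\theta+m-1)$ for $m\ge1$. $\mathrm{ESF}(\theta)$ is the law of $(C_1(n),\ldots,C_n(n))$ with $\mathbb{P}(C_j(n)=c_j,\,1\le j\le n)=\frac{n!}{\theta_{(n)}}\prod_{j=1}^n(\theta/j)^{c_j}/c_j!$ whenever $\sum_j jc_j=n$. For $n\ge1$, $\lambda_n(\theta)=\mathbb{P}(C_1(n)=0)=\frac{n!}{\theta_{(n)}}\sum_{j=0}^n(-1)^j\frac{\theta^j}{j!}\frac{\theta_{(n-j)}}{(n-j)!}$, and $\lambda_0(\theta)=1$. The derangement cycle counts $(\tilde C_2(n),\ldots,\tilde C_n(n))$ have the law of $(C_2(n),\ldots,C_n(n))$ conditioned on $C_1(n)=0$. *)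

theory Defs
  imports "HOL-Analysis.Analysis"
begin

definition cyc_configs :: "nat \<Rightarrow> (nat \<Rightarrow> nat) set" where
  "cyc_configs n = {c. (\<forall>i. c i \<noteq> 0 \<longrightarrow> i \<in> {1..n}) \<and> (\<Sum>i=1..n. i * c i) = n}"

text \<open>ESF(theta) probability mass function; theta_(n) is pochhammer theta n.\<close>
definition esf :: "real \<Rightarrow> nat \<Rightarrow> (nat \<Rightarrow> nat) \<Rightarrow> real" where
  "esf \<theta> n c = (if c \<in> cyc_configs n then
      fact n / pochhammer \<theta> n * (\<Prod>i=1..n. (\<theta> / real i) ^ c i / fact (c i))
    else 0)"

definition esf_prob :: "real \<Rightarrow> nat \<Rightarrow> ((nat \<Rightarrow> nat) \<Rightarrow> bool) \<Rightarrow> real" where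
  "esf_prob \<theta> n P = (\<Sum>c\<in>{c\<in>cyc_configs n. P c}. esf \<theta> n c)"

definition esf_lambda :: "real \<Rightarrow> nat \<Rightarrow> real" where
  "esf_lambda \<theta> n = (if n = 0 then 1 else esf_prob \<theta> n (\<lambda>c. c 1 = 0))"

text \<open>P(tilde C_j(n) = r): law of C_j(n) conditioned on C_1(n) = 0.\<close>
definition derang_prob :: "real \<Rightarrow> nat \<Rightarrow> nat \<Rightarrow> nat \<Rightarrow> real" where
  "derang_prob \<theta> n j r =
     esf_prob \<theta> n (\<lambda>c. c j = r \<and> c 1 = 0) / esf_prob \<theta> n (\<lambda>c. c 1 = 0)"

end

theory Submission
  imports Defs
begin

(* Let W_S(m) be the ESF weight, without the factor m!/theta_(m), of the configurations of size m
   that have no cycle with length in S; thus W_{1}(m) = lambda_m(theta) theta_(m) / m!. The weight is a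
   product over cycle lengths, so fixing C_j = r for j not in S splits off (theta/j)^r/r! and leaves
   W_{S+j}(m - jr). Summing over r exhibits W_S as the convolution of W_{S+j} with the exponential
   series in theta/j, and convolving with the series of exp(-x) inverts this. The conditional law of
   the derangement cycle count is the ratio of two such weights with S = {1}. *)

lemma sum_alternating_exp_convolution:
  fixes a :: "'a :: field_char_0"
  shows "(\<Sum>k\<le>q. (-1)^k * a^k / fact k * (a^(q-k) / fact (q-k))) = (if q = 0 then 1 else 0)"
proof -
  have "(\<Sum>k\<le>q. (-1)^k * a^k / fact k * (a^(q-k) / fact (q-k)))
      = (\<Sum>k\<le>q. of_nat (q choose k) * (-a)^k * a^(q-k)) / fact q"
    unfolding sum_divide_distrib
  proof (rule sum.cong)
    fix k assume "k \<in> {..q}"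
    then have "of_nat (q choose k) * (-a)^k * a^(q-k) / fact q
        = fact q / (fact k * fact (q - k)) * ((-1)^k * a^k) * a^(q-k) / fact q"
      by (simp only: binomial_fact power_minus[of a k] atMost_iff)
    also have "\<dots> = (-1)^k * a^k / fact k * (a^(q-k) / fact (q-k))"
      by simp
    finally show "(-1)^k * a^k / fact k * (a^(q-k) / fact (q-k))
             = of_nat (q choose k) * (-a)^k * a^(q-k) / fact q" ..
  qed simp
  also have "\<dots> = (-a + a)^q / fact q" by (simp only: binomial_ring)
  finally show ?thesis by simp
qed

lemma diff_mult_div_nat:
  fixes m j k :: nat
  assumes "j > 0" "k \<le> m div j"
  shows "(m - j * k) div j = m div j - k"
proof -
  have "k * j \<le> m" using assms by (simp add: less_eq_div_iff_mult_less_eq)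
  then have "m div j = (m - j * k + k * j) div j" by (simp add: mult.commute)
  then show ?thesis using assms(1) by simp
qed

lemma exp_series_convolution_inversion:
  fixes a :: "'a :: field_char_0" and A W :: "nat \<Rightarrow> 'a"
  assumes "j > 0" and W: "\<And>t. W t = (\<Sum>r=0..t div j. a^r / fact r * A (t - j*r))"
  shows "A m = (\<Sum>k=0..m div j. (-1)^k * a^k / fact k * W (m - j*k))"
proof -
  define K where "K = m div j"
  define g where "g = (\<lambda>k r. (-1)^k * a^k / fact k * (a^r / fact r * A (m - j*(k+r))))"
  have "(\<Sum>k=0..K. (-1)^k * a^k / fact k * W (m - j*k)) = (\<Sum>k=0..K. \<Sum>r=0..K-k. g k r)"
  proof (rule sum.cong)
    fix k assume "k \<in> {0..K}"
    then have "(m - j*k) div j = K - k" using diff_mult_div_nat[OF \<open>j > 0\<close>] unfolding K_def by simp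
    then show "(-1)^k * a^k / fact k * W (m - j*k) = (\<Sum>r=0..K-k. g k r)"
      unfolding W g_def by (simp add: sum_distrib_left diff_diff_left algebra_simps)
  qed simp
  also have "\<dots> = (\<Sum>(k,r)\<in>{(k,r). k + r \<le> K}. g k r)"
    by (simp add: sum.Sigma) (rule sum.cong, auto)
  also have "\<dots> = (\<Sum>q\<le>K. \<Sum>k\<le>q. g k (q - k))"
    by (rule sum.triangle_reindex_eq)
  also have "\<dots> = (\<Sum>q\<le>K. if q = 0 then A m else 0)"
  proof (rule sum.cong)
    fix q
    have "(\<Sum>k\<le>q. g k (q - k))
        = (\<Sum>k\<le>q. (-1)^k * a^k / fact k * (a^(q-k) / fact (q-k))) * A (m - j*q)"
      unfolding g_def sum_distrib_right by (rule sum.cong) auto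
    then show "(\<Sum>k\<le>q. g k (q - k)) = (if q = 0 then A m else 0)"
      by (simp only: sum_alternating_exp_convolution) simp
  qed simp
  finally show ?thesis unfolding K_def by simp
qed

lemma cyc_configs_iff:
  assumes "m \<le> N"
  shows "c \<in> cyc_configs m \<longleftrightarrow> (\<forall>i. c i \<noteq> 0 \<longrightarrow> i \<in> {1..N}) \<and> (\<Sum>i=1..N. i * c i) = m"
proof -
  have extend: "(\<Sum>i=1..N. i * c i) = (\<Sum>i=1..m. i * c i)" if "\<forall>i. c i \<noteq> 0 \<longrightarrow> i \<le> m"
    using that assms by (intro sum.mono_neutral_right) auto
  show ?thesis
  proof
    assume "c \<in> cyc_configs m"
    then have supp: "\<forall>i. c i \<noteq> 0 \<longrightarrow> i \<in> {1..m}" and "(\<Sum>i=1..m. i * c i) = m"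
      unfolding cyc_configs_def by auto
    moreover have "(\<Sum>i=1..N. i * c i) = (\<Sum>i=1..m. i * c i)" using supp by (intro extend) auto
    moreover have "\<forall>i. c i \<noteq> 0 \<longrightarrow> i \<in> {1..N}" using supp assms by (meson atLeastAtMost_iff le_trans)
    ultimately show "(\<forall>i. c i \<noteq> 0 \<longrightarrow> i \<in> {1..N}) \<and> (\<Sum>i=1..N. i * c i) = m"
      by simp
  next
    assume c: "(\<forall>i. c i \<noteq> 0 \<longrightarrow> i \<in> {1..N}) \<and> (\<Sum>i=1..N. i * c i) = m"
    have "i \<le> m" if "c i \<noteq> 0" for i
    proof -
      have "i \<le> i * c i" using that by simp
      also have "\<dots> \<le> (\<Sum>i=1..N. i * c i)" using c that by (intro member_le_sum) auto
      finally show ?thesis using c by simp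
    qed
    then have "\<forall>i. c i \<noteq> 0 \<longrightarrow> i \<in> {1..m}" using c by auto
    then show "c \<in> cyc_configs m" using c extend unfolding cyc_configs_def by simp
  qed
qed

lemma cyc_configs_count_le:
  assumes "c \<in> cyc_configs m"
  shows "j * c j \<le> m"
proof (cases "c j = 0")
  case False
  with assms have "j \<in> {1..m}" "(\<Sum>i=1..m. i * c i) = m" unfolding cyc_configs_def by auto
  then show ?thesis using member_le_sum[of j "{1..m}" "\<lambda>i. i * c i"] by auto
qed simp

lemma finite_cyc_configs: "finite (cyc_configs m)"
proof -
  let ?ext = "\<lambda>f i. if i \<in> {1..m} then f i else 0"
  have "cyc_configs m \<subseteq> ?ext ` ({1..m} \<rightarrow>\<^sub>E {0..m})"
  proof
    fix c assume c: "c \<in> cyc_configs m"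
    have "c i \<le> m" for i
    proof (cases "c i = 0")
      case False
      then have "1 \<le> i" using c unfolding cyc_configs_def by auto
      then have "c i \<le> i * c i" by simp
      then show ?thesis using cyc_configs_count_le[OF c, of i] by linarith
    qed simp
    then have "restrict c {1..m} \<in> {1..m} \<rightarrow>\<^sub>E {0..m}" by auto
    moreover have "c = ?ext (restrict c {1..m})" using c by (auto simp: cyc_configs_def fun_eq_iff)
    ultimately show "c \<in> ?ext ` ({1..m} \<rightarrow>\<^sub>E {0..m})" by blast
  qed
  then show ?thesis by (rule finite_subset) (intro finite_imageI finite_PiE, auto)
qed

lemma sum_mult_fun_upd:
  fixes c :: "nat \<Rightarrow> nat"
  assumes "finite A" "j \<in> A"
  shows "(\<Sum>i\<in>A. i * (c(j:=v)) i) = j * v + (\<Sum>i\<in>A-{j}. i * c i)"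
proof -
  have "(\<Sum>i\<in>A-{j}. i * (c(j:=v)) i) = (\<Sum>i\<in>A-{j}. i * c i)" by (rule sum.cong) auto
  then show ?thesis using sum.remove[OF assms, of "\<lambda>i. i * (c(j:=v)) i"] by simp
qed

definition cycle_weight :: "real \<Rightarrow> nat \<Rightarrow> (nat \<Rightarrow> nat) \<Rightarrow> real" where
  "cycle_weight \<theta> N c = (\<Prod>i=1..N. (\<theta> / real i) ^ c i / fact (c i))"

definition weight_avoiding :: "real \<Rightarrow> nat set \<Rightarrow> nat \<Rightarrow> real" where
  "weight_avoiding \<theta> S m = (\<Sum>c\<in>{c\<in>cyc_configs m. \<forall>i\<in>S. c i = 0}. cycle_weight \<theta> m c)"

lemma cycle_weight_cyc_configs:
  assumes "c \<in> cyc_configs M" "M \<le> N"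
  shows "cycle_weight \<theta> N c = cycle_weight \<theta> M c"
proof -
  have "\<forall>i. c i \<noteq> 0 \<longrightarrow> i \<in> {1..M}" using assms(1) unfolding cyc_configs_def by simp
  then have "c i = 0" if "i \<in> {1..N} - {1..M}" for i using that by blast
  then show ?thesis
    unfolding cycle_weight_def using assms(2) by (intro prod.mono_neutral_right) auto
qed

lemma cycle_weight_fun_upd_zero:
  assumes "j \<in> {1..N}"
  shows "cycle_weight \<theta> N c = (\<theta> / real j) ^ c j / fact (c j) * cycle_weight \<theta> N (c(j:=0))"
proof -
  let ?w = "\<lambda>c i. (\<theta> / real i) ^ c i / fact (c i)"
  have "(\<Prod>i\<in>{1..N}-{j}. ?w (c(j:=0)) i) = (\<Prod>i\<in>{1..N}-{j}. ?w c i)"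
    by (rule prod.cong) auto
  then show ?thesis
    using prod.remove[OF finite_atLeastAtMost assms, of "?w c"]
      prod.remove[OF finite_atLeastAtMost assms, of "?w (c(j:=0))"]
    unfolding cycle_weight_def by simp
qed

lemma esf_prob_eq_cycle_weight:
  "esf_prob \<theta> n P = fact n / pochhammer \<theta> n * (\<Sum>c\<in>{c\<in>cyc_configs n. P c}. cycle_weight \<theta> n c)"
  unfolding esf_prob_def sum_distrib_left by (rule sum.cong) (auto simp: esf_def cycle_weight_def)

lemma esf_lambda_eq_weight_avoiding:
  assumes "\<theta> > 0"
  shows "esf_lambda \<theta> m * pochhammer \<theta> m / fact m = weight_avoiding \<theta> {1} m"
proof (cases "m = 0")
  case True
  have "{c\<in>cyc_configs 0. \<forall>i\<in>{1}. c i = 0} = {\<lambda>_. 0}"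
    unfolding cyc_configs_def by (auto simp: fun_eq_iff)
  then show ?thesis using True by (simp add: esf_lambda_def weight_avoiding_def cycle_weight_def)
next
  case False
  have "pochhammer \<theta> m > 0" using pochhammer_pos assms by blast
  then show ?thesis
    using False by (simp add: esf_lambda_def esf_prob_eq_cycle_weight weight_avoiding_def)
qed

lemma weight_avoiding_eq_sum_counts:
  assumes "j > 0"
  shows "weight_avoiding \<theta> S m
    = (\<Sum>r=0..m div j. \<Sum>c\<in>{c\<in>cyc_configs m. (\<forall>i\<in>S. c i = 0) \<and> c j = r}. cycle_weight \<theta> m c)"
proof -
  let ?C = "{c\<in>cyc_configs m. \<forall>i\<in>S. c i = 0}"
  have "(\<lambda>c. c j) ` ?C \<subseteq> {0..m div j}"
    using cyc_configs_count_le[of _ m j] assms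
    by (auto simp: less_eq_div_iff_mult_less_eq mult.commute)
  then have "weight_avoiding \<theta> S m = (\<Sum>r=0..m div j. \<Sum>c\<in>{c\<in>?C. c j = r}. cycle_weight \<theta> m c)"
    unfolding weight_avoiding_def using finite_cyc_configs by (intro sum.group[symmetric]) auto
  then show ?thesis by (simp add: conj_assoc)
qed

lemma cycle_weight_sum_fixed_count:
  assumes "j > 0" "j \<notin> S" "j * r \<le> m"
  shows "(\<Sum>c\<in>{c\<in>cyc_configs m. (\<forall>i\<in>S. c i = 0) \<and> c j = r}. cycle_weight \<theta> m c)
    = (\<theta> / real j) ^ r / fact r * weight_avoiding \<theta> (insert j S) (m - j * r)"
proof -
  \<comment> \<open>a common index range for configurations of size m and m - jr, containing j\<close>
  define N where "N = max j m"
  have j: "j \<in> {1..N}" and mN: "m \<le> N" and mjrN: "m - j * r \<le> N"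
    using assms unfolding N_def by auto
  have sum_j: "(\<Sum>i=1..N. i * (c(j:=v)) i) = j * v + (\<Sum>i\<in>{1..N}-{j}. i * c i)" for c v
    by (rule sum_mult_fun_upd[OF finite_atLeastAtMost j])
  have remove_cycles: "c(j:=0) \<in> cyc_configs (m - j * r) \<and> (\<forall>i\<in>insert j S. (c(j:=0)) i = 0)"
    if "c \<in> cyc_configs m" "\<forall>i\<in>S. c i = 0" "c j = r" for c
  proof -
    have "(\<forall>i. c i \<noteq> 0 \<longrightarrow> i \<in> {1..N}) \<and> (\<Sum>i=1..N. i * (c(j:=c j)) i) = m"
      using that(1) cyc_configs_iff[OF mN] by simp
    then show ?thesis using that sum_j[of c] cyc_configs_iff[OF mjrN] by auto
  qed
  have add_cycles: "b(j:=r) \<in> cyc_configs m \<and> (\<forall>i\<in>S. (b(j:=r)) i = 0) \<and> (b(j:=r)) j = r"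
    if "b \<in> cyc_configs (m - j * r)" "\<forall>i\<in>insert j S. b i = 0" for b
  proof -
    have "(\<forall>i. b i \<noteq> 0 \<longrightarrow> i \<in> {1..N}) \<and> (\<Sum>i=1..N. i * (b(j:=b j)) i) = m - j * r"
      using that(1) cyc_configs_iff[OF mjrN] by simp
    then show ?thesis using that sum_j[of b] cyc_configs_iff[OF mN] assms j by auto
  qed
  have weight: "cycle_weight \<theta> m c = (\<theta> / real j) ^ r / fact r * cycle_weight \<theta> (m - j * r) (c(j:=0))"
    if "c \<in> cyc_configs m" "\<forall>i\<in>S. c i = 0" "c j = r" for c
    using cycle_weight_fun_upd_zero[OF j, of \<theta> c] remove_cycles[OF that] that(3)
      cycle_weight_cyc_configs[OF that(1) mN] cycle_weight_cyc_configs[OF _ mjrN]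
    by simp
  show ?thesis
    unfolding weight_avoiding_def sum_distrib_left
    by (rule sum.reindex_bij_witness[where j="\<lambda>c. c(j:=0)" and i="\<lambda>b. b(j:=r)"])
       (use remove_cycles add_cycles weight in auto)
qed

lemma weight_avoiding_recurrence:
  assumes "j > 0" "j \<notin> S"
  shows "weight_avoiding \<theta> S m
    = (\<Sum>r=0..m div j. (\<theta> / real j) ^ r / fact r * weight_avoiding \<theta> (insert j S) (m - j * r))"
proof -
  have "(\<Sum>c\<in>{c\<in>cyc_configs m. (\<forall>i\<in>S. c i = 0) \<and> c j = r}. cycle_weight \<theta> m c)
    = (\<theta> / real j) ^ r / fact r * weight_avoiding \<theta> (insert j S) (m - j * r)"
    if "r \<in> {0..m div j}" for r
  proof -
    have "j * r \<le> m" using that assms(1) by (simp add: less_eq_div_iff_mult_less_eq mult.commute)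
    then show ?thesis by (rule cycle_weight_sum_fixed_count[OF assms])
  qed
  then show ?thesis using weight_avoiding_eq_sum_counts[OF assms(1)] by simp
qed

lemma weight_avoiding_insert:
  assumes "j > 0" "j \<notin> S"
  shows "weight_avoiding \<theta> (insert j S) m
    = (\<Sum>k=0..m div j. (-1) ^ k * (\<theta> / real j) ^ k / fact k * weight_avoiding \<theta> S (m - j * k))"
  using exp_series_convolution_inversion[OF assms(1) weight_avoiding_recurrence[OF assms]] by simp

lemma weight_avoiding_insert_shifted:
  assumes "j > 0" "j \<notin> S" "r \<le> m div j"
  shows "weight_avoiding \<theta> (insert j S) (m - j * r)
    = (\<Sum>i=r..m div j. (-1) ^ (i - r) / fact (i - r) * weight_avoiding \<theta> S (m - j * i) * (\<theta> / real j) ^ (i - r))"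
    (is "_ = (\<Sum>i=r..m div j. ?g i)")
proof -
  have "(\<Sum>i=r..m div j. ?g i) = (\<Sum>k=0..m div j - r. ?g (k + r))"
    using assms(3) sum.shift_bounds_cl_nat_ivl[of ?g 0 r "m div j - r"] by simp
  also have "\<dots> = (\<Sum>k=0..(m - j * r) div j.
      (-1) ^ k * (\<theta> / real j) ^ k / fact k * weight_avoiding \<theta> S (m - j * r - j * k))"
  proof (rule sum.cong)
    fix k
    have "m - j * r - j * k = m - j * (k + r)" by (simp add: diff_diff_left algebra_simps)
    then show "?g (k + r) = (-1) ^ k * (\<theta> / real j) ^ k / fact k * weight_avoiding \<theta> S (m - j * r - j * k)"
      by simp
  qed (simp add: diff_mult_div_nat[OF assms(1,3)])
  also have "\<dots> = weight_avoiding \<theta> (insert j S) (m - j * r)"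
    by (rule weight_avoiding_insert[OF assms(1,2), symmetric])
  finally show ?thesis ..
qed

lemma derang_prob_eq_weight_ratio:
  assumes "\<theta> > 0" "j > 0" "j \<notin> {1}" "j * r \<le> n"
  shows "derang_prob \<theta> n j r
    = (\<theta> / real j) ^ r / fact r * weight_avoiding \<theta> {j, 1} (n - j * r) / weight_avoiding \<theta> {1} n"
proof -
  have "pochhammer \<theta> n > 0" using pochhammer_pos assms(1) by blast
  then have "derang_prob \<theta> n j r
      = (\<Sum>c\<in>{c\<in>cyc_configs n. (\<forall>i\<in>{1}. c i = 0) \<and> c j = r}. cycle_weight \<theta> n c)
        / weight_avoiding \<theta> {1} n"
    unfolding derang_prob_def esf_prob_eq_cycle_weight weight_avoiding_def
    by (simp add: conj_commute)
  also have "\<dots> = (\<theta> / real j) ^ r / fact r * weight_avoiding \<theta> {j, 1} (n - j * r) / weight_avoiding \<theta> {1} n"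
    using cycle_weight_sum_fixed_count[OF assms(2-4), of \<theta>] by simp
  finally show ?thesis .
qed

theorem mainTheorem10:
  fixes \<theta> :: real and n j r :: nat
  assumes "\<theta> > 0" and "n \<ge> 2" and "j \<in> {2..n}" and "r \<le> n div j"
  shows "derang_prob \<theta> n j r =
    (\<theta> / real j) ^ r * (1 / fact r) * (fact n / (esf_lambda \<theta> n * pochhammer \<theta> n)) *
    (\<Sum>i=r..n div j. (-1) ^ (i - r) / fact (i - r) *
       (esf_lambda \<theta> (n - j * i) * pochhammer \<theta> (n - j * i) / fact (n - j * i)) *
       (\<theta> / real j) ^ (i - r))"
proof -
  have j: "j > 0" "j \<notin> {1}" using assms(3) by auto
  have jr: "j * r \<le> n" using assms(4) j(1) by (simp add: less_eq_div_iff_mult_less_eq mult.commute)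
  have lambda: "esf_lambda \<theta> m * pochhammer \<theta> m / fact m = weight_avoiding \<theta> {1} m" for m
    by (rule esf_lambda_eq_weight_avoiding[OF assms(1)])
  have "fact n / (esf_lambda \<theta> n * pochhammer \<theta> n) = 1 / weight_avoiding \<theta> {1} n"
    unfolding lambda[of n, symmetric] by simp
  then show ?thesis
    using derang_prob_eq_weight_ratio[OF assms(1) j jr]
    unfolding lambda weight_avoiding_insert_shifted[OF j assms(4)] by simp
qed

end
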